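(* Let $d\ge2$. Let $\Omega\subset\mathbb{R}^d_+$ be open and bounded and satisfy the cone condition: for every $x\in\partial\Omega$ there exist a cone $\mathcal{K}_x$ with nonempty interior and a neighborhood $V_x$ of $x$ such that $y\in V_x\setminus\Omega$ implies $(y+\mathcal{K}_x)\cap\overline{\Omega}\cap V_x\subset\{y\}$. Let $f:\mathbb{R}^d_+\to[0,\infty)$ satisfy: there is a continuous nondecreasing $m:[0,\infty)\to[0,\infty)$ with $m(0)=0$ and $|f(x)-f(y)|\le m(|x-y|)$ for $x,y\in\Omega$, and $f(x)=0$ for $x\notin\Omega$. Let $u,v:\overline{\mathbb{R}^d_+}\to\mathbb{R}$ be continuous, with $u$ a viscosity subsolution and $v$ a viscosity supersolution of \[u_{x_1}\cdots u_{x_d}=f\quad\text{on }\mathbb{R}^d_+,\] and assume $u$ is truncatable and $v$ is Pareto-monotone. If $u\le v$ on $\partial\mathbb{R}^d_+$, then $u\le v$ on $\mathbb{R}^d_+$.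
   Context: $\mathbb{R}^d_+=\{x:x_i>0\ \forall i\}$; $x\leqq y$ means $x_i\le y_i$ for all $i$. $v$ is Pareto-monotone if $x\leqq y$ implies $v(x)\le v(y)$. For bounded $g$, $g^*(x)=\limsup_{r\searrow0}\sup\{g(y):|y-x|\le r\}$ and $g_*=-(-g)^*$. Superdifferential $D^+u(x)$: all $p$ with $u(y)\le u(x)+\langle p,y-x\rangle+o(|y-x|)$ as $y\to x$; subdifferential $D^-u(x)$ with $\ge$. A continuous $u$ is a viscosity subsolution of $u_{x_1}\cdots u_{x_d}=g$ on $\mathbb{R}^d_+$ if $p_1\cdots p_d\le g^*(x)$ for all $x\in\mathbb{R}^d_+$, $p\in D^+u(x)$; a supersolution if $p_1\cdots p_d\ge g_*(x)$ for all $p\in D^-u(x)$. A viscosity subsolution $u$ of $u_{x_1}\cdots u_{x_d}=f$ is truncatable if for every $z\in\mathbb{R}^d_+$, the function $\tilde u(x)=u(\min(x_1,z_1),\dots,\min(x_d,z_d))$ is a viscosity subsolution of $\tilde u_{x_1}\cdots\tilde u_{x_d}=\hat f$ on $\mathbb{R}^d_+$, where $\hat f(x)=f^*(x)$ if $x\leqq z$ and $\hat f(x)=0$ otherwise. *)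

theory Defs
  imports "HOL-Analysis.Analysis"
begin

definition pos_orthant :: "(real ^ 'n) set" where
  "pos_orthant = {x. \<forall>i. 0 < x $ i}"

definition cl_orthant :: "(real ^ 'n) set" where
  "cl_orthant = {x. \<forall>i. 0 \<le> x $ i}"

definition vle :: "real ^ 'n \<Rightarrow> real ^ 'n \<Rightarrow> bool" where
  "vle x y \<longleftrightarrow> (\<forall>i. x $ i \<le> y $ i)"

definition pareto_monotone :: "(real ^ 'n) set \<Rightarrow> (real ^ 'n \<Rightarrow> real) \<Rightarrow> bool" where
  "pareto_monotone S v \<longleftrightarrow> (\<forall>x\<in>S. \<forall>y\<in>S. vle x y \<longrightarrow> v x \<le> v y)"

text \<open>Upper envelope g^*(x) = limsup_{r \<searrow> 0} sup {g y : |y - x| \<le> r}, where g is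
  defined on the domain S (values in extended reals to avoid unboundedness issues).\<close>
definition usc_env :: "(real ^ 'n) set \<Rightarrow> (real ^ 'n \<Rightarrow> real) \<Rightarrow> real ^ 'n \<Rightarrow> ereal" where
  "usc_env S g x = Limsup (at_right (0::real)) (\<lambda>r. SUP y\<in>cball x r \<inter> S. ereal (g y))"

definition lsc_env :: "(real ^ 'n) set \<Rightarrow> (real ^ 'n \<Rightarrow> real) \<Rightarrow> real ^ 'n \<Rightarrow> ereal" where
  "lsc_env S g x = - usc_env S (\<lambda>y. - g y) x"

definition superdiff :: "(real ^ 'n \<Rightarrow> real) \<Rightarrow> real ^ 'n \<Rightarrow> (real ^ 'n) set" where
  "superdiff u x = {p. \<forall>e>0. \<forall>\<^sub>F y in at x. u y \<le> u x + p \<bullet> (y - x) + e * norm (y - x)}"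

definition subdiff :: "(real ^ 'n \<Rightarrow> real) \<Rightarrow> real ^ 'n \<Rightarrow> (real ^ 'n) set" where
  "subdiff u x = {p. \<forall>e>0. \<forall>\<^sub>F y in at x. u y \<ge> u x + p \<bullet> (y - x) - e * norm (y - x)}"

text \<open>Viscosity sub/supersolution of u_{x_1} ... u_{x_d} = g on R^d_+
  (continuity of u is assumed separately).\<close>
definition visc_sub :: "(real ^ 'n \<Rightarrow> real) \<Rightarrow> (real ^ 'n \<Rightarrow> real) \<Rightarrow> bool" where
  "visc_sub u g \<longleftrightarrow> (\<forall>x\<in>pos_orthant. \<forall>p\<in>superdiff u x.
      ereal (\<Prod>i\<in>UNIV. p $ i) \<le> usc_env pos_orthant g x)"

definition visc_super :: "(real ^ 'n \<Rightarrow> real) \<Rightarrow> (real ^ 'n \<Rightarrow> real) \<Rightarrow> bool" where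
  "visc_super u g \<longleftrightarrow> (\<forall>x\<in>pos_orthant. \<forall>p\<in>subdiff u x.
      ereal (\<Prod>i\<in>UNIV. p $ i) \<ge> lsc_env pos_orthant g x)"

definition trunc :: "(real ^ 'n \<Rightarrow> real) \<Rightarrow> real ^ 'n \<Rightarrow> real ^ 'n \<Rightarrow> real" where
  "trunc u z x = u (\<chi> i. min (x $ i) (z $ i))"

definition hat_rhs :: "(real ^ 'n \<Rightarrow> real) \<Rightarrow> real ^ 'n \<Rightarrow> real ^ 'n \<Rightarrow> real" where
  "hat_rhs f z x = (if vle x z then real_of_ereal (usc_env pos_orthant f x) else 0)"

definition truncatable :: "(real ^ 'n \<Rightarrow> real) \<Rightarrow> (real ^ 'n \<Rightarrow> real) \<Rightarrow> bool" where
  "truncatable u f \<longleftrightarrow> visc_sub u f \<and>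
     (\<forall>z\<in>pos_orthant. visc_sub (trunc u z) (hat_rhs f z))"

definition cone_condition :: "(real ^ 'n) set \<Rightarrow> bool" where
  "cone_condition \<Omega> \<longleftrightarrow> (\<forall>x\<in>frontier \<Omega>. \<exists>K V. cone K \<and> interior K \<noteq> {} \<and>
      open V \<and> x \<in> V \<and>
      (\<forall>y\<in>V - \<Omega>. ((\<lambda>k. y + k) ` K) \<inter> closure \<Omega> \<inter> V \<subseteq> {y}))"

end

theory Submission
  imports Defs
begin

(*
  If u > v at some point z, truncate u at z and tilt v by \<epsilon> times the coordinate sum.
  Pareto monotonicity of v makes the truncation harmless, so trunc u z - v - \<epsilon> \<Sigma> x_i attains a
  positive maximum at an interior point x0.  Doubling the variables with the penalty
  |n (x - y) - \<eta>|^2 + |x - x0|^2, where \<eta> points into the cone of the cone condition at x0,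
  gives maximisers x_n, y_n \<rightarrow> x0 such that y_n \<in> \<Omega> whenever x_n \<in> closure \<Omega>.  The semijets there
  satisfy p \<approx> q + \<epsilon> componentwise with q \<ge> 0, so \<Prod>p exceeds \<Prod>q + \<epsilon>^d up to a factor tending
  to 1.  This contradicts \<Prod>p \<le> f(y_n) + m(|x_n - y_n|) \<le> \<Prod>q + m(|x_n - y_n|) when y_n \<in> \<Omega>, and
  \<Prod>p \<le> 0 when x_n lies outside closure \<Omega>.
*)

section \<open>Semijets\<close>

lemma superdiff_of_quadratic_bound:
  fixes w :: "real ^ 'n \<Rightarrow> real"
  assumes "r > 0" and "c \<ge> 0"
    and bound: "\<And>y. y \<in> ball x r \<Longrightarrow> w y \<le> w x + p \<bullet> (y - x) + c * (norm (y - x))\<^sup>2"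
  shows "p \<in> superdiff w x"
  unfolding superdiff_def
proof (intro CollectI allI impI)
  fix e :: real
  assume "e > 0"
  define d where "d = min r (e / (c + 1))"
  have "d > 0"
    using \<open>r > 0\<close> \<open>e > 0\<close> \<open>c \<ge> 0\<close> by (simp add: d_def)
  then have "\<forall>\<^sub>F y in at x. y \<in> ball x d"
    by (auto simp: eventually_at dist_commute)
  then show "\<forall>\<^sub>F y in at x. w y \<le> w x + p \<bullet> (y - x) + e * norm (y - x)"
  proof eventually_elim
    case (elim y)
    then have small: "norm (y - x) \<le> e / (c + 1)" and "y \<in> ball x r"
      by (auto simp: d_def dist_norm norm_minus_commute)
    have "c * norm (y - x) \<le> (c + 1) * (e / (c + 1))"
      using small \<open>c \<ge> 0\<close> by (intro mult_mono) auto
    then have "c * norm (y - x) \<le> e"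
      using \<open>c \<ge> 0\<close> by simp
    then have "c * (norm (y - x))\<^sup>2 \<le> e * norm (y - x)"
      by (simp add: power2_eq_square mult_right_mono flip: mult.assoc)
    then show ?case
      using bound[OF \<open>y \<in> ball x r\<close>] by linarith
  qed
qed

lemma subdiff_of_quadratic_bound:
  fixes v :: "real ^ 'n \<Rightarrow> real"
  assumes "r > 0" and "c \<ge> 0"
    and bound: "\<And>y. y \<in> ball x r \<Longrightarrow> v x + q \<bullet> (y - x) - c * (norm (y - x))\<^sup>2 \<le> v y"
  shows "q \<in> subdiff v x"
proof -
  have "- q \<in> superdiff (\<lambda>y. - v y) x"
    using bound by (intro superdiff_of_quadratic_bound[OF assms(1,2)]) force
  then show ?thesis
    unfolding superdiff_def subdiff_def by (auto simp: algebra_simps)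
qed

lemma superdiff_at_local_max:
  fixes w \<phi> :: "real ^ 'n \<Rightarrow> real"
  assumes "r > 0" and "c \<ge> 0"
    and max: "\<And>y. y \<in> ball x r \<Longrightarrow> w y - \<phi> y \<le> w x - \<phi> x"
    and \<phi>: "\<And>y. y \<in> ball x r \<Longrightarrow> \<phi> y \<le> \<phi> x + p \<bullet> (y - x) + c * (norm (y - x))\<^sup>2"
  shows "p \<in> superdiff w x"
  using assms(1,2) by (rule superdiff_of_quadratic_bound) (use max \<phi> in fastforce)

lemma subdiff_at_local_min:
  fixes v \<psi> :: "real ^ 'n \<Rightarrow> real"
  assumes "r > 0" and "c \<ge> 0"
    and min: "\<And>y. y \<in> ball x r \<Longrightarrow> v x - \<psi> x \<le> v y - \<psi> y"
    and \<psi>: "\<And>y. y \<in> ball x r \<Longrightarrow> \<psi> x + q \<bullet> (y - x) - c * (norm (y - x))\<^sup>2 \<le> \<psi> y"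
  shows "q \<in> subdiff v x"
  using assms(1,2) by (rule subdiff_of_quadratic_bound) (use min \<psi> in fastforce)

lemma subdiff_add_inner:
  assumes "q \<in> subdiff (\<lambda>y. v y + a \<bullet> y) x"
  shows "q - a \<in> subdiff v x"
  using assms unfolding subdiff_def
  by (auto elim!: eventually_mono simp: inner_diff_left inner_diff_right algebra_simps)

lemma subdiff_nonneg_of_pareto_monotone:
  fixes v :: "real ^ 'n \<Rightarrow> real"
  assumes mono: "pareto_monotone cl_orthant v" and "x \<in> pos_orthant"
    and "q \<in> subdiff v x"
  shows "0 \<le> q $ i"
proof (rule ccontr)
  assume "\<not> 0 \<le> q $ i"
  then have "- q $ i / 2 > 0" by simp
  with \<open>q \<in> subdiff v x\<close> obtain d where "d > 0" and
    sub: "\<And>y. y \<noteq> x \<Longrightarrow> dist y x < d \<Longrightarrow> v x + q \<bullet> (y - x) - (- q $ i / 2) * norm (y - x) \<le> v y"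
    unfolding subdiff_def eventually_at by blast
  have "x $ i > 0"
    using \<open>x \<in> pos_orthant\<close> by (simp add: pos_orthant_def)
  define t where "t = min (d / 2) (x $ i)"
  have t: "0 < t" "t < d" "t \<le> x $ i"
    using \<open>d > 0\<close> \<open>x $ i > 0\<close> by (auto simp: t_def)
  define y where "y = x - t *\<^sub>R axis i 1"
  have "norm (y - x) = t"
    using t by (simp add: y_def)
  then have "v x + q \<bullet> (y - x) - (- q $ i / 2) * t \<le> v y"
    using sub[of y] t by (auto simp: dist_norm)
  moreover have "q \<bullet> (y - x) = - t * q $ i"
    by (simp add: y_def inner_axis)
  moreover have "v y \<le> v x"
    using mono \<open>x \<in> pos_orthant\<close> t
    unfolding pareto_monotone_def
    by (auto simp: y_def cl_orthant_def pos_orthant_def vle_def axis_def less_imp_le)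
  ultimately have "0 \<le> t * q $ i"
    by (simp add: algebra_simps)
  then show False
    using t \<open>\<not> 0 \<le> q $ i\<close> by (simp add: zero_le_mult_iff)
qed

section \<open>Products of perturbed vectors\<close>

lemma prod_add_const_ge:
  fixes q :: "'i \<Rightarrow> real"
  assumes "finite A" "A \<noteq> {}" "\<And>i. i \<in> A \<Longrightarrow> 0 \<le> q i" "0 \<le> e"
  shows "(\<Prod>i\<in>A. q i) + e ^ card A \<le> (\<Prod>i\<in>A. q i + e)"
  using assms
proof (induction A rule: finite_ne_induct)
  case (insert a A)
  have "0 \<le> q a" "0 \<le> (\<Prod>i\<in>A. q i)"
    using insert.prems by (auto intro: prod_nonneg)
  moreover have "(q a + e) * ((\<Prod>i\<in>A. q i) + e ^ card A) \<le> (q a + e) * (\<Prod>i\<in>A. q i + e)"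
    using insert by (intro mult_left_mono) auto
  ultimately show ?case
    using insert \<open>0 \<le> e\<close> by (simp add: algebra_simps) (smt (verit) mult_nonneg_nonneg zero_le_power)
qed simp

lemma prod_ge_of_componentwise_ge:
  fixes p q :: "'i \<Rightarrow> real"
  assumes "finite A" "A \<noteq> {}" and q: "\<And>i. i \<in> A \<Longrightarrow> 0 \<le> q i"
    and "0 < \<epsilon>" "0 \<le> t" "t \<le> \<epsilon>"
    and p: "\<And>i. i \<in> A \<Longrightarrow> q i + \<epsilon> - t \<le> p i"
  shows "(1 - t / \<epsilon>) ^ card A * ((\<Prod>i\<in>A. q i) + \<epsilon> ^ card A) \<le> (\<Prod>i\<in>A. p i)"
proof -
  define c where "c = 1 - t / \<epsilon>"
  have "0 \<le> c" "c \<le> 1"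
    using assms(4-6) by (auto simp: c_def field_simps)
  have cq: "c * (q i + \<epsilon>) \<le> p i" if "i \<in> A" for i
  proof -
    have "(t / \<epsilon>) * \<epsilon> \<le> (t / \<epsilon>) * (q i + \<epsilon>)"
      using q[OF that] assms(4,5) by (intro mult_left_mono) auto
    then show ?thesis
      using p[OF that] \<open>0 < \<epsilon>\<close> by (simp add: c_def algebra_simps)
  qed
  have "c ^ card A * ((\<Prod>i\<in>A. q i) + \<epsilon> ^ card A) \<le> c ^ card A * (\<Prod>i\<in>A. q i + \<epsilon>)"
    using prod_add_const_ge[OF assms(1,2)] q \<open>0 < \<epsilon>\<close> \<open>0 \<le> c\<close>
    by (intro mult_left_mono) auto
  also have "\<dots> = (\<Prod>i\<in>A. c * (q i + \<epsilon>))"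
    by (simp add: prod.distrib)
  also have "\<dots> \<le> (\<Prod>i\<in>A. p i)"
    using cq q \<open>0 < \<epsilon>\<close> \<open>0 \<le> c\<close> by (intro prod_mono) auto
  finally show ?thesis
    by (simp add: c_def)
qed

section \<open>The cone condition\<close>

lemma open_contains_nonzero:
  fixes U :: "'a::{real_normed_vector, perfect_space} set"
  assumes "open U" "U \<noteq> {}"
  obtains a where "a \<in> U" "a \<noteq> 0"
proof -
  have "U \<noteq> {0}"
    using \<open>open U\<close> not_open_singleton[of "0::'a"] by auto
  with \<open>U \<noteq> {}\<close> show thesis
    using that by blast
qed

lemma cone_condition_frontier_direction:
  fixes K V :: "(real ^ 'n) set"
  assumes "cone K" "interior K \<noteq> {}" "open V" "x \<in> V"
    and cone_cond: "\<forall>y\<in>V - \<Omega>. ((\<lambda>k. y + k) ` K) \<inter> closure \<Omega> \<inter> V \<subseteq> {y}"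
  obtains \<eta> where "\<And>X Y. X \<longlonglongrightarrow> x \<Longrightarrow> Y \<longlonglongrightarrow> x \<Longrightarrow>
      (\<lambda>n. real n *\<^sub>R (X n - Y n) - \<eta>) \<longlonglongrightarrow> 0 \<Longrightarrow>
      \<forall>\<^sub>F n in sequentially. Y n \<in> \<Omega> \<or> X n \<notin> closure \<Omega>"
proof -
  obtain \<eta> where "\<eta> \<in> interior K" "\<eta> \<noteq> 0"
    using open_contains_nonzero[of "interior K"] assms(2) by auto
  moreover obtain \<rho>\<^sub>0 where "\<rho>\<^sub>0 > 0" "ball \<eta> \<rho>\<^sub>0 \<subseteq> K"
    using \<open>\<eta> \<in> interior K\<close> open_contains_ball[of "interior K"] interior_subset[of K] by blast
  \<comment> \<open>\<rho> \<le> |\<eta>| keeps 0 outside the ball, so that X n \<noteq> Y n below.\<close>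
  ultimately obtain \<rho> where "\<rho> > 0" "\<rho> \<le> norm \<eta>" "ball \<eta> \<rho> \<subseteq> K"
    by (intro that[of "min \<rho>\<^sub>0 (norm \<eta>)"]) auto
  show thesis
  proof (rule that)
    fix X Y :: "nat \<Rightarrow> real ^ 'n"
    assume "X \<longlonglongrightarrow> x" "Y \<longlonglongrightarrow> x" and lim: "(\<lambda>n. real n *\<^sub>R (X n - Y n) - \<eta>) \<longlonglongrightarrow> 0"
    have "\<forall>\<^sub>F n in sequentially. X n \<in> V" "\<forall>\<^sub>F n in sequentially. Y n \<in> V"
      using \<open>X \<longlonglongrightarrow> x\<close> \<open>Y \<longlonglongrightarrow> x\<close> \<open>open V\<close> \<open>x \<in> V\<close> by (auto intro: topological_tendstoD)
    moreover have "\<forall>\<^sub>F n in sequentially. real n *\<^sub>R (X n - Y n) \<in> ball \<eta> \<rho>"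
      using tendstoD[OF lim \<open>\<rho> > 0\<close>] by (simp add: dist_norm norm_minus_commute)
    ultimately show "\<forall>\<^sub>F n in sequentially. Y n \<in> \<Omega> \<or> X n \<notin> closure \<Omega>"
      using eventually_gt_at_top[of 0]
    proof eventually_elim
      case (elim n)
      then have "X n \<in> V" "Y n \<in> V" "n > 0" by simp_all
      have scaled: "real n *\<^sub>R (X n - Y n) \<in> K"
        using elim(3) \<open>ball \<eta> \<rho> \<subseteq> K\<close> by blast
      have "(1 / real n) *\<^sub>R (real n *\<^sub>R (X n - Y n)) \<in> K"
        by (rule mem_cone[OF \<open>cone K\<close> scaled]) simp
      then have "X n \<in> (\<lambda>k. Y n + k) ` K"
        using \<open>n > 0\<close> by (intro image_eqI[of _ _ "X n - Y n"]) simp_all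
      moreover have "X n \<noteq> Y n"
        using elim(3) \<open>\<rho> \<le> norm \<eta>\<close> by auto
      ultimately show ?case
        using cone_cond \<open>X n \<in> V\<close> \<open>Y n \<in> V\<close> by blast
    qed
  qed
qed

lemma cone_condition_direction:
  fixes \<Omega> :: "(real ^ 'n) set"
  assumes "open \<Omega>" and "cone_condition \<Omega>"
  obtains \<eta> where "\<And>X Y. X \<longlonglongrightarrow> x \<Longrightarrow> Y \<longlonglongrightarrow> x \<Longrightarrow>
      (\<lambda>n. real n *\<^sub>R (X n - Y n) - \<eta>) \<longlonglongrightarrow> 0 \<Longrightarrow>
      \<forall>\<^sub>F n in sequentially. Y n \<in> \<Omega> \<or> X n \<notin> closure \<Omega>"
proof (cases "x \<in> frontier \<Omega>")
  case True
  with \<open>cone_condition \<Omega>\<close> have "\<exists>K V. cone K \<and> interior K \<noteq> {} \<and> open V \<and> x \<in> V \<and>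
      (\<forall>y\<in>V - \<Omega>. ((\<lambda>k. y + k) ` K) \<inter> closure \<Omega> \<inter> V \<subseteq> {y})"
    unfolding cone_condition_def by (rule bspec)
  then obtain K V where KV: "cone K" "interior K \<noteq> {}" "open V" "x \<in> V"
      "\<forall>y\<in>V - \<Omega>. ((\<lambda>k. y + k) ` K) \<inter> closure \<Omega> \<inter> V \<subseteq> {y}"
    by blast
  show thesis
    by (rule cone_condition_frontier_direction[OF KV]) (rule that)
next
  case False
  then have "x \<in> \<Omega> \<or> x \<in> - closure \<Omega>"
    using \<open>open \<Omega>\<close> by (auto simp: frontier_def interior_open)
  show thesis
  proof (rule that)
    fix X Y :: "nat \<Rightarrow> real ^ 'n"
    assume "X \<longlonglongrightarrow> x" "Y \<longlonglongrightarrow> x"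
    from \<open>x \<in> \<Omega> \<or> x \<in> - closure \<Omega>\<close>
    show "\<forall>\<^sub>F n in sequentially. Y n \<in> \<Omega> \<or> X n \<notin> closure \<Omega>"
    proof
      assume "x \<in> \<Omega>"
      from topological_tendstoD[OF \<open>Y \<longlonglongrightarrow> x\<close> \<open>open \<Omega>\<close> this] show ?thesis
        by (rule eventually_mono) simp
    next
      assume "x \<in> - closure \<Omega>"
      from topological_tendstoD[OF \<open>X \<longlonglongrightarrow> x\<close> _ this] show ?thesis
        by (rule eventually_mono) auto
    qed
  qed
qed

section \<open>Envelopes of the right-hand side\<close>

lemma usc_env_le_of_bound:
  fixes g :: "real ^ 'n \<Rightarrow> real" and B :: "real \<Rightarrow> real"
  assumes "R > 0"
    and bound: "\<And>r y. 0 < r \<Longrightarrow> r < R \<Longrightarrow> y \<in> cball x r \<inter> S \<Longrightarrow> g y \<le> B r"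
    and lim: "(B \<longlongrightarrow> c) (at_right 0)"
  shows "usc_env S g x \<le> ereal c"
proof -
  have "\<forall>\<^sub>F r in at_right (0::real). 0 < r \<and> r < R"
    using \<open>R > 0\<close> by (auto simp: eventually_at_right_field)
  then have "\<forall>\<^sub>F r in at_right 0. (SUP y\<in>cball x r \<inter> S. ereal (g y)) \<le> ereal (B r)"
    by eventually_elim (auto intro!: SUP_least bound)
  then have "usc_env S g x \<le> Limsup (at_right 0) (\<lambda>r. ereal (B r))"
    unfolding usc_env_def by (rule Limsup_mono)
  also have "\<dots> = ereal c"
    using lim by (intro lim_imp_Limsup) auto
  finally show ?thesis .
qed

lemma tendsto_at_right_shift:
  fixes m :: "real \<Rightarrow> real"
  assumes "continuous_on {0..} m" "0 \<le> a"
  shows "((\<lambda>r. m (a + r)) \<longlongrightarrow> m a) (at_right 0)"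
proof -
  have "((\<lambda>r. a + r) \<longlongrightarrow> a) (at_right (0::real))"
    by (auto intro!: tendsto_eq_intros)
  moreover have "\<forall>\<^sub>F r in at_right (0::real). a + r \<in> {0..}"
    using \<open>0 \<le> a\<close> by (auto simp: eventually_at_right_field intro: exI[of _ 1])
  ultimately show ?thesis
    using continuous_on_tendsto_compose[OF assms(1)] \<open>0 \<le> a\<close> by auto
qed

locale rhs_with_modulus =
  fixes \<Omega> :: "(real ^ 'n) set" and f :: "real ^ 'n \<Rightarrow> real" and m :: "real \<Rightarrow> real"
  assumes \<Omega>_sub: "\<Omega> \<subseteq> pos_orthant" and \<Omega>_open: "open \<Omega>"
    and f_nonneg: "\<forall>x\<in>pos_orthant. 0 \<le> f x"
    and m_cont: "continuous_on {0..} m" and m_mono: "mono_on {0..} m"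
    and m_nonneg: "\<forall>t\<ge>0. 0 \<le> m t" and m0: "m 0 = 0"
    and f_mod: "\<forall>x\<in>\<Omega>. \<forall>y\<in>\<Omega>. \<bar>f x - f y\<bar> \<le> m (dist x y)"
    and f_out: "\<forall>x\<in>pos_orthant - \<Omega>. f x = 0"
begin

lemma modulus_mono: "0 \<le> a \<Longrightarrow> a \<le> b \<Longrightarrow> m a \<le> m b"
  using m_mono by (auto simp: mono_on_def)

lemma rhs_le_add_modulus:
  assumes "y \<in> \<Omega>" "x \<in> pos_orthant"
  shows "f x \<le> f y + m (dist x y)"
proof (cases "x \<in> \<Omega>")
  case True
  then have "\<bar>f x - f y\<bar> \<le> m (dist x y)"
    using f_mod \<open>y \<in> \<Omega>\<close> by blast
  then show ?thesis
    by (simp add: abs_le_iff)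
next
  case False
  then have "f x = 0"
    using f_out \<open>x \<in> pos_orthant\<close> by blast
  moreover have "0 \<le> f y"
    using f_nonneg \<Omega>_sub \<open>y \<in> \<Omega>\<close> by blast
  moreover have "0 \<le> m (dist x y)"
    using m_nonneg by simp
  ultimately show ?thesis
    by linarith
qed

lemma usc_env_rhs_le_add_modulus:
  assumes "y \<in> \<Omega>"
  shows "usc_env pos_orthant f x \<le> ereal (f y + m (dist x y))"
proof (rule usc_env_le_of_bound[where R=1 and B="\<lambda>r. f y + m (dist x y + r)"])
  fix r x' assume "0 < r" and x': "x' \<in> cball x r \<inter> pos_orthant"
  then have "m (dist x' y) \<le> m (dist x y + r)"
    using dist_triangle[of x' y x] by (intro modulus_mono) (auto simp: dist_commute)
  then show "f x' \<le> f y + m (dist x y + r)"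
    using rhs_le_add_modulus[OF assms, of x'] x' by simp
next
  show "((\<lambda>r. f y + m (dist x y + r)) \<longlongrightarrow> f y + m (dist x y)) (at_right 0)"
    by (intro tendsto_intros tendsto_at_right_shift m_cont) simp
qed simp

lemma usc_env_hat_rhs_le_add_modulus:
  assumes "y \<in> \<Omega>"
  shows "usc_env pos_orthant (hat_rhs f z) x \<le> ereal (f y + m (dist x y))"
proof (rule usc_env_le_of_bound[where R=1 and B="\<lambda>r. f y + m (dist x y + r)"])
  fix r x' assume "0 < r" and x': "x' \<in> cball x r \<inter> pos_orthant"
  then have "m (dist x' y) \<le> m (dist x y + r)"
    using dist_triangle[of x' y x] by (intro modulus_mono) (auto simp: dist_commute)
  moreover have "0 \<le> f y + m (dist x' y)"
    using assms \<Omega>_sub f_nonneg m_nonneg by auto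
  then have "real_of_ereal (usc_env pos_orthant f x') \<le> f y + m (dist x' y)"
    using usc_env_rhs_le_add_modulus[OF assms, of x'] by (cases "usc_env pos_orthant f x'") auto
  ultimately show "hat_rhs f z x' \<le> f y + m (dist x y + r)"
    using \<open>0 \<le> f y + m (dist x' y)\<close> unfolding hat_rhs_def by auto
next
  show "((\<lambda>r. f y + m (dist x y + r)) \<longlongrightarrow> f y + m (dist x y)) (at_right 0)"
    by (intro tendsto_intros tendsto_at_right_shift m_cont) simp
qed simp

lemma usc_env_hat_rhs_outside:
  assumes "x \<notin> closure \<Omega>"
  shows "usc_env pos_orthant (hat_rhs f z) x \<le> 0"
proof -
  have "open (- closure \<Omega>)"
    by auto
  then obtain r where "r > 0" "ball x r \<subseteq> - closure \<Omega>"
    using assms open_contains_ball by blast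
  then have "ball x r \<inter> \<Omega> = {}"
    using closure_subset by blast
  have "usc_env pos_orthant (hat_rhs f z) x \<le> ereal 0"
  proof (rule usc_env_le_of_bound[where R="r/2" and B="\<lambda>_. 0"])
    fix s x' assume "0 < s" "s < r/2" and x': "x' \<in> cball x s \<inter> pos_orthant"
    have "usc_env pos_orthant f x' \<le> ereal 0"
    proof (rule usc_env_le_of_bound[where R="r/2" and B="\<lambda>_. 0"])
      fix s' x'' assume "0 < s'" "s' < r/2" and x'': "x'' \<in> cball x' s' \<inter> pos_orthant"
      then have "dist x x'' < r"
        using x' \<open>s < r/2\<close> dist_triangle[of x x'' x'] by auto
      then have "x'' \<notin> \<Omega>"
        using \<open>ball x r \<inter> \<Omega> = {}\<close> by auto
      then show "f x'' \<le> 0"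
        using f_out x'' by auto
    qed (use \<open>r > 0\<close> in auto)
    then show "hat_rhs f z x' \<le> 0"
      unfolding hat_rhs_def by (cases "usc_env pos_orthant f x'") auto
  qed (use \<open>r > 0\<close> in auto)
  then show ?thesis
    by (simp add: zero_ereal_def)
qed

lemma rhs_le_lsc_env:
  assumes "y \<in> \<Omega>"
  shows "ereal (f y) \<le> lsc_env pos_orthant f y"
proof -
  obtain r where "r > 0" "ball y r \<subseteq> \<Omega>"
    using \<Omega>_open assms open_contains_ball by blast
  have "usc_env pos_orthant (\<lambda>x. - f x) y \<le> ereal (- f y + 0)"
  proof (rule usc_env_le_of_bound[where R=r and B="\<lambda>s. - f y + m (0 + s)"])
    fix s x assume "0 < s" "s < r" and x: "x \<in> cball y s \<inter> pos_orthant"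
    then have "x \<in> \<Omega>"
      using \<open>ball y r \<subseteq> \<Omega>\<close> by (auto simp: dist_commute)
    then have "f y - f x \<le> m (dist x y)"
      using f_mod assms by force
    moreover have "m (dist x y) \<le> m (0 + s)"
      using x by (intro modulus_mono) (auto simp: dist_commute)
    ultimately show "- f x \<le> - f y + m (0 + s)"
      by linarith
  next
    show "((\<lambda>s. - f y + m (0 + s)) \<longlongrightarrow> - f y + 0) (at_right 0)"
      using tendsto_at_right_shift[OF m_cont, of 0] m0 by (intro tendsto_intros) auto
  qed (use \<open>r > 0\<close> in auto)
  then show ?thesis
    unfolding lsc_env_def
    by (metis add.right_neutral ereal_minus_le_minus ereal_uminus_uminus uminus_ereal.simps(1))
qed

lemma rhs_bounded_above:
  assumes "bounded \<Omega>"
  obtains F where "\<And>y. y \<in> \<Omega> \<Longrightarrow> f y \<le> F"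
proof (cases "\<Omega> = {}")
  case False
  then obtain a where "a \<in> \<Omega>" by blast
  obtain e where e: "\<And>y. y \<in> \<Omega> \<Longrightarrow> dist a y \<le> e"
    using assms bounded_any_center by blast
  show thesis
  proof (rule that)
    fix y assume "y \<in> \<Omega>"
    then have "f y \<le> f a + m (dist y a)"
      using rhs_le_add_modulus[OF \<open>a \<in> \<Omega>\<close>] \<Omega>_sub by auto
    also have "m (dist y a) \<le> m (max e 0)"
      using e[OF \<open>y \<in> \<Omega>\<close>] by (intro modulus_mono) (auto simp: dist_commute)
    finally show "f y \<le> f a + m (max e 0)"
      by simp
  qed
qed (use that in blast)

end

section \<open>Doubling of variables\<close>

text \<open>The penalty is centred at the shift \<eta>, so that n (x - y) \<approx> \<eta> at a maximiser.\<close>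
definition doubling_fun ::
    "('a::real_normed_vector \<Rightarrow> real) \<Rightarrow> ('a \<Rightarrow> real) \<Rightarrow> 'a \<Rightarrow> 'a \<Rightarrow> nat \<Rightarrow> 'a \<Rightarrow> 'a \<Rightarrow> real" where
  "doubling_fun w V \<eta> x\<^sub>0 n x y =
     w x - V y - (norm (real n *\<^sub>R (x - y) - \<eta>))\<^sup>2 - (norm (x - x\<^sub>0))\<^sup>2"

lemma doubling_fun_maximizers:
  fixes w V :: "'a::euclidean_space \<Rightarrow> real"
  assumes "compact D" "D \<noteq> {}" "continuous_on D w" "continuous_on D V"
  obtains X Y where "\<And>n. X n \<in> D" "\<And>n. Y n \<in> D"
    "\<And>n a b. a \<in> D \<Longrightarrow> b \<in> D \<Longrightarrow> doubling_fun w V \<eta> x\<^sub>0 n a b \<le> doubling_fun w V \<eta> x\<^sub>0 n (X n) (Y n)"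
proof -
  have "\<exists>z. z \<in> D \<times> D \<and> (\<forall>z'\<in>D \<times> D.
      doubling_fun w V \<eta> x\<^sub>0 n (fst z') (snd z') \<le> doubling_fun w V \<eta> x\<^sub>0 n (fst z) (snd z))" for n
  proof -
    have "continuous_on (D \<times> D) (\<lambda>z. doubling_fun w V \<eta> x\<^sub>0 n (fst z) (snd z))"
      unfolding doubling_fun_def
      by (intro continuous_intros continuous_on_compose2[OF \<open>continuous_on D w\<close>]
          continuous_on_compose2[OF \<open>continuous_on D V\<close>]) auto
    then show ?thesis
      using continuous_attains_sup[OF compact_Times[OF \<open>compact D\<close> \<open>compact D\<close>]] \<open>D \<noteq> {}\<close>
      by blast
  qed
  then obtain Z where Z: "\<And>n. Z n \<in> D \<times> D" "\<And>n z'. z' \<in> D \<times> D \<Longrightarrow>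
      doubling_fun w V \<eta> x\<^sub>0 n (fst z') (snd z') \<le> doubling_fun w V \<eta> x\<^sub>0 n (fst (Z n)) (snd (Z n))"
    by metis
  show thesis
  proof (rule that)
    show "fst (Z n) \<in> D" "snd (Z n) \<in> D" for n
      using Z(1)[of n] by (auto simp: mem_Times_iff)
    show "doubling_fun w V \<eta> x\<^sub>0 n a b \<le> doubling_fun w V \<eta> x\<^sub>0 n (fst (Z n)) (snd (Z n))"
      if "a \<in> D" "b \<in> D" for n a b
      using Z(2)[of "(a, b)" n] that by simp
  qed
qed

text \<open>Compare the maximum with the value at (x0, x0 - \<eta>/n), where both penalties vanish.\<close>
lemma doubling_fun_max_estimate:
  assumes "n > 0"
    and max: "doubling_fun w V \<eta> x\<^sub>0 n x\<^sub>0 (x\<^sub>0 - (1 / real n) *\<^sub>R \<eta>) \<le> doubling_fun w V \<eta> x\<^sub>0 n x y"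
    and local_max: "w x - V x \<le> w x\<^sub>0 - V x\<^sub>0"
  shows "(norm (real n *\<^sub>R (x - y) - \<eta>))\<^sup>2 + (norm (x - x\<^sub>0))\<^sup>2
    \<le> V x - V y + (V (x\<^sub>0 - (1 / real n) *\<^sub>R \<eta>) - V x\<^sub>0)"
proof -
  have "real n *\<^sub>R (x\<^sub>0 - (x\<^sub>0 - (1 / real n) *\<^sub>R \<eta>)) - \<eta> = 0"
    using \<open>n > 0\<close> by simp
  then show ?thesis
    using max local_max unfolding doubling_fun_def by simp
qed

lemma tendsto_zero_of_norm_square_le:
  fixes Z :: "nat \<Rightarrow> 'a::real_normed_vector"
  assumes "\<forall>\<^sub>F n in sequentially. (norm (Z n))\<^sup>2 \<le> E n" and "E \<longlonglongrightarrow> 0"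
  shows "Z \<longlonglongrightarrow> 0"
proof -
  have "(\<lambda>n. (norm (Z n))\<^sup>2) \<longlonglongrightarrow> 0"
    by (rule tendsto_sandwich[of "\<lambda>_. 0" _ _ E]) (use assms in auto)
  then have "(\<lambda>n. sqrt ((norm (Z n))\<^sup>2)) \<longlonglongrightarrow> sqrt 0"
    by (intro tendsto_intros)
  then have "(\<lambda>n. norm (Z n)) \<longlonglongrightarrow> 0"
    by (simp only: real_sqrt_abs abs_norm_cancel real_sqrt_zero)
  then show ?thesis
    by (rule tendsto_norm_zero_iff[THEN iffD1])
qed

lemma le_one_plus_square: "(x::real) \<le> 1 + x\<^sup>2"
proof (cases "x \<le> 1")
  case False
  then have "x \<le> x * x"
    by (simp add: mult_le_cancel_left1)
  then show ?thesis
    by (simp add: power2_eq_square)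
qed (simp add: add_increasing2)

lemma LIMSEQ_minus_scaleR_over_n:
  fixes x a :: "'a::real_normed_vector"
  shows "(\<lambda>n. x - (1 / real n) *\<^sub>R a) \<longlonglongrightarrow> x"
proof -
  have "(\<lambda>n. x - (1 / real n) *\<^sub>R a) \<longlonglongrightarrow> x - 0 *\<^sub>R a"
    by (intro tendsto_intros lim_const_over_n)
  then show ?thesis
    by simp
qed

lemma doubling_maximizers_estimate:
  fixes w V :: "'a::euclidean_space \<Rightarrow> real"
  assumes "r > 0"
    and local_max: "\<And>x. x \<in> cball x\<^sub>0 r \<Longrightarrow> w x - V x \<le> w x\<^sub>0 - V x\<^sub>0"
    and X: "\<And>n. X n \<in> cball x\<^sub>0 r"
    and max: "\<And>n a b. a \<in> cball x\<^sub>0 r \<Longrightarrow> b \<in> cball x\<^sub>0 r \<Longrightarrow>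
      doubling_fun w V \<eta> x\<^sub>0 n a b \<le> doubling_fun w V \<eta> x\<^sub>0 n (X n) (Y n)"
  shows "\<forall>\<^sub>F n in sequentially. (norm (real n *\<^sub>R (X n - Y n) - \<eta>))\<^sup>2 + (norm (X n - x\<^sub>0))\<^sup>2
    \<le> V (X n) - V (Y n) + (V (x\<^sub>0 - (1 / real n) *\<^sub>R \<eta>) - V x\<^sub>0)"
proof -
  have "\<forall>\<^sub>F n in sequentially. x\<^sub>0 - (1 / real n) *\<^sub>R \<eta> \<in> ball x\<^sub>0 r"
    using \<open>r > 0\<close> by (intro topological_tendstoD[OF LIMSEQ_minus_scaleR_over_n]) auto
  then show ?thesis
    using eventually_gt_at_top[of 0]
  proof eventually_elim
    case (elim n)
    moreover have "x\<^sub>0 \<in> cball x\<^sub>0 r"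
      using \<open>r > 0\<close> by simp
    ultimately show ?case
      by (intro doubling_fun_max_estimate[where w = w] max local_max X) auto
  qed
qed

lemma doubling_maximizers_converge:
  fixes w V :: "'a::euclidean_space \<Rightarrow> real"
  assumes "r > 0" and V_cont: "continuous_on (cball x\<^sub>0 r) V"
    and local_max: "\<And>x. x \<in> cball x\<^sub>0 r \<Longrightarrow> w x - V x \<le> w x\<^sub>0 - V x\<^sub>0"
    and X: "\<And>n. X n \<in> cball x\<^sub>0 r" and Y: "\<And>n. Y n \<in> cball x\<^sub>0 r"
    and max: "\<And>n a b. a \<in> cball x\<^sub>0 r \<Longrightarrow> b \<in> cball x\<^sub>0 r \<Longrightarrow>
      doubling_fun w V \<eta> x\<^sub>0 n a b \<le> doubling_fun w V \<eta> x\<^sub>0 n (X n) (Y n)"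
  shows "X \<longlonglongrightarrow> x\<^sub>0" and "Y \<longlonglongrightarrow> x\<^sub>0" and "(\<lambda>n. real n *\<^sub>R (X n - Y n) - \<eta>) \<longlonglongrightarrow> 0"
proof -
  define A where "A n = real n *\<^sub>R (X n - Y n) - \<eta>" for n
  define E where "E n = V (X n) - V (Y n) + (V (x\<^sub>0 - (1 / real n) *\<^sub>R \<eta>) - V x\<^sub>0)" for n
  have estimate: "\<forall>\<^sub>F n in sequentially. (norm (A n))\<^sup>2 + (norm (X n - x\<^sub>0))\<^sup>2 \<le> E n"
    unfolding A_def E_def using \<open>r > 0\<close> local_max X max by (rule doubling_maximizers_estimate)
  have "compact (V ` cball x\<^sub>0 r)"
    using V_cont by (intro compact_continuous_image) simp_all
  then obtain B where B: "\<And>y. y \<in> cball x\<^sub>0 r \<Longrightarrow> \<bar>V y\<bar> \<le> B"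
    by (meson compact_imp_bounded bounded_real imageI)
  have shift_in: "\<forall>\<^sub>F n in sequentially. x\<^sub>0 - (1 / real n) *\<^sub>R \<eta> \<in> cball x\<^sub>0 r"
    by (rule topological_tendstoD[OF LIMSEQ_minus_scaleR_over_n[of x\<^sub>0 \<eta>] open_ball[of x\<^sub>0 r],
          THEN eventually_mono])
      (use \<open>r > 0\<close> in \<open>auto simp del: dist_norm\<close>)
  have gap_bound: "\<forall>\<^sub>F n in sequentially. dist (X n) (Y n) \<le> (1 + 4 * B + norm \<eta>) / real n"
    using estimate shift_in eventually_gt_at_top[of 0]
  proof eventually_elim
    case (elim n)
    have "E n \<le> 4 * B"
      using B[OF X[of n]] B[OF Y[of n]] B[of x\<^sub>0] B[OF elim(2)] \<open>r > 0\<close> unfolding E_def by fastforce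
    then have "norm (A n) \<le> 1 + 4 * B"
      using elim(1) le_one_plus_square[of "norm (A n)"] zero_le_power2[of "norm (X n - x\<^sub>0)"]
      by linarith
    then have "real n * norm (X n - Y n) \<le> 1 + 4 * B + norm \<eta>"
      using norm_triangle_ineq[of "A n" \<eta>] by (simp add: A_def)
    then show ?case
      using elim(3) by (simp add: dist_norm field_simps)
  qed
  have dist_lim: "(\<lambda>n. dist (X n) (Y n)) \<longlonglongrightarrow> 0"
    by (rule tendsto_sandwich[of "\<lambda>_. 0" _ _ "\<lambda>n. (1 + 4 * B + norm \<eta>) / real n"])
      (use gap_bound in \<open>auto intro: lim_const_over_n\<close>)
  have "(\<lambda>n. dist (V (X n)) (V (Y n))) \<longlonglongrightarrow> 0"
    using compact_uniformly_continuous[OF V_cont] X Y dist_lim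
    unfolding uniformly_continuous_on_sequentially by simp
  moreover have "(\<lambda>n. V (x\<^sub>0 - (1 / real n) *\<^sub>R \<eta>)) \<longlonglongrightarrow> V x\<^sub>0"
    using continuous_on_tendsto_compose[OF V_cont LIMSEQ_minus_scaleR_over_n _ shift_in] \<open>r > 0\<close>
    by simp
  ultimately have "E \<longlonglongrightarrow> 0 + (V x\<^sub>0 - V x\<^sub>0)"
    unfolding E_def[abs_def] by (intro tendsto_intros) (simp add: dist_real_def tendsto_rabs_zero_iff)
  then have "E \<longlonglongrightarrow> 0"
    by simp
  have "\<forall>\<^sub>F n in sequentially. (norm (X n - x\<^sub>0))\<^sup>2 \<le> E n"
    using estimate by eventually_elim (smt (verit) zero_le_power2)
  then have "(\<lambda>n. X n - x\<^sub>0) \<longlonglongrightarrow> 0"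
    using \<open>E \<longlonglongrightarrow> 0\<close> by (rule tendsto_zero_of_norm_square_le)
  then show "X \<longlonglongrightarrow> x\<^sub>0"
    by (rule LIM_zero_cancel)
  moreover have "(\<lambda>n. X n - Y n) \<longlonglongrightarrow> 0"
    using dist_lim by (simp add: dist_norm tendsto_norm_zero_iff)
  ultimately show "Y \<longlonglongrightarrow> x\<^sub>0"
    using tendsto_diff by fastforce
  have "\<forall>\<^sub>F n in sequentially. (norm (A n))\<^sup>2 \<le> E n"
    using estimate by eventually_elim (smt (verit) zero_le_power2)
  then show "(\<lambda>n. real n *\<^sub>R (X n - Y n) - \<eta>) \<longlonglongrightarrow> 0"
    using \<open>E \<longlonglongrightarrow> 0\<close> unfolding A_def by (rule tendsto_zero_of_norm_square_le)
qed

lemma norm_add_square: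
  fixes a b :: "'a::real_inner"
  shows "(norm (a + b))\<^sup>2 = (norm a)\<^sup>2 + 2 * (a \<bullet> b) + (norm b)\<^sup>2"
  using dot_norm[of a b] by simp

lemma doubling_fun_superdiff:
  fixes w V :: "real ^ 'n \<Rightarrow> real"
  assumes "r > 0"
    and max: "\<And>a. a \<in> ball x r \<Longrightarrow> doubling_fun w V \<eta> x\<^sub>0 n a y \<le> doubling_fun w V \<eta> x\<^sub>0 n x y"
  shows "(2 * real n) *\<^sub>R (real n *\<^sub>R (x - y) - \<eta>) + 2 *\<^sub>R (x - x\<^sub>0) \<in> superdiff w x"
proof (rule superdiff_at_local_max[OF \<open>r > 0\<close>, where c = "(real n)\<^sup>2 + 1"])
  define \<phi> where "\<phi> a = (norm (real n *\<^sub>R (a - y) - \<eta>))\<^sup>2 + (norm (a - x\<^sub>0))\<^sup>2" for a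
  fix a
  assume "a \<in> ball x r"
  then show "w a - \<phi> a \<le> w x - \<phi> x"
    using max[of a] by (simp add: doubling_fun_def \<phi>_def)
  define B where "B = real n *\<^sub>R (x - y) - \<eta>"
  have "real n *\<^sub>R (a - y) - \<eta> = B + real n *\<^sub>R (a - x)"
    by (simp add: B_def algebra_simps)
  then have "(norm (real n *\<^sub>R (a - y) - \<eta>))\<^sup>2
      = (norm B)\<^sup>2 + 2 * real n * (B \<bullet> (a - x)) + (real n)\<^sup>2 * (norm (a - x))\<^sup>2"
    by (simp add: norm_add_square power_mult_distrib)
  moreover have "(norm (a - x\<^sub>0))\<^sup>2
      = (norm (x - x\<^sub>0))\<^sup>2 + 2 * ((x - x\<^sub>0) \<bullet> (a - x)) + (norm (a - x))\<^sup>2"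
    using norm_add_square[of "x - x\<^sub>0" "a - x"] by simp
  ultimately show "\<phi> a \<le> \<phi> x + ((2 * real n) *\<^sub>R B + 2 *\<^sub>R (x - x\<^sub>0)) \<bullet> (a - x)
      + ((real n)\<^sup>2 + 1) * (norm (a - x))\<^sup>2"
    unfolding \<phi>_def B_def by (simp add: inner_add_left algebra_simps)
qed simp

lemma doubling_fun_subdiff:
  fixes w V :: "real ^ 'n \<Rightarrow> real"
  assumes "r > 0"
    and max: "\<And>b. b \<in> ball y r \<Longrightarrow> doubling_fun w V \<eta> x\<^sub>0 n x b \<le> doubling_fun w V \<eta> x\<^sub>0 n x y"
  shows "(2 * real n) *\<^sub>R (real n *\<^sub>R (x - y) - \<eta>) \<in> subdiff V y"
proof (rule subdiff_at_local_min[OF \<open>r > 0\<close>, where c = "(real n)\<^sup>2"])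
  define \<psi> where "\<psi> b = - (norm (real n *\<^sub>R (x - b) - \<eta>))\<^sup>2" for b
  fix b
  assume "b \<in> ball y r"
  then show "V y - \<psi> y \<le> V b - \<psi> b"
    using max[of b] by (simp add: doubling_fun_def \<psi>_def)
  define B where "B = real n *\<^sub>R (x - y) - \<eta>"
  have "real n *\<^sub>R (x - b) - \<eta> = B + (- real n) *\<^sub>R (b - y)"
    by (simp add: B_def algebra_simps)
  then have "(norm (real n *\<^sub>R (x - b) - \<eta>))\<^sup>2
      = (norm B)\<^sup>2 - 2 * real n * (B \<bullet> (b - y)) + (real n)\<^sup>2 * (norm (b - y))\<^sup>2"
    using norm_add_square[of B "(- real n) *\<^sub>R (b - y)"] by (simp add: power_mult_distrib)
  then show "\<psi> y + ((2 * real n) *\<^sub>R B) \<bullet> (b - y) - (real n)\<^sup>2 * (norm (b - y))\<^sup>2 \<le> \<psi> b"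
    unfolding \<psi>_def B_def by simp
qed simp

lemma doubling_fun_semijets:
  fixes w v :: "real ^ 'n \<Rightarrow> real"
  assumes "x \<in> ball x\<^sub>0 (r / 2)" "y \<in> ball x\<^sub>0 (r / 2)"
    and max: "\<And>a b. a \<in> cball x\<^sub>0 r \<Longrightarrow> b \<in> cball x\<^sub>0 r \<Longrightarrow>
      doubling_fun w (\<lambda>y. v y + l \<bullet> y) \<eta> x\<^sub>0 n a b \<le> doubling_fun w (\<lambda>y. v y + l \<bullet> y) \<eta> x\<^sub>0 n x y"
  shows "(2 * real n) *\<^sub>R (real n *\<^sub>R (x - y) - \<eta>) + 2 *\<^sub>R (x - x\<^sub>0) \<in> superdiff w x"
    and "(2 * real n) *\<^sub>R (real n *\<^sub>R (x - y) - \<eta>) - l \<in> subdiff v y"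
proof -
  have "dist x\<^sub>0 x < r / 2"
    using \<open>x \<in> ball x\<^sub>0 (r / 2)\<close> by simp
  then have "r > 0"
    using zero_le_dist[of x\<^sub>0 x] by linarith
  have in_cball: "b \<in> cball x\<^sub>0 r" if "b \<in> ball c (r / 2)" "c \<in> ball x\<^sub>0 (r / 2)" for b c
    using that dist_triangle[of x\<^sub>0 b c] by (auto simp: dist_commute)
  show "(2 * real n) *\<^sub>R (real n *\<^sub>R (x - y) - \<eta>) + 2 *\<^sub>R (x - x\<^sub>0) \<in> superdiff w x"
    using \<open>r > 0\<close> in_cball assms by (intro doubling_fun_superdiff[where r = "r / 2" and V = "\<lambda>y. v y + l \<bullet> y"]) auto
  have "(2 * real n) *\<^sub>R (real n *\<^sub>R (x - y) - \<eta>) \<in> subdiff (\<lambda>y. v y + l \<bullet> y) y"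
    using \<open>r > 0\<close> in_cball assms by (intro doubling_fun_subdiff[where r = "r / 2" and w = w and x\<^sub>0 = x\<^sub>0]) auto
  then show "(2 * real n) *\<^sub>R (real n *\<^sub>R (x - y) - \<eta>) - l \<in> subdiff v y"
    by (rule subdiff_add_inner)
qed

lemma cone_condition_doubling_maximizers:
  fixes w V :: "real ^ 'n \<Rightarrow> real"
  assumes "open \<Omega>" "cone_condition \<Omega>" "r > 0"
    and w_cont: "continuous_on (cball x\<^sub>0 r) w" and V_cont: "continuous_on (cball x\<^sub>0 r) V"
    and local_max: "\<And>x. x \<in> cball x\<^sub>0 r \<Longrightarrow> w x - V x \<le> w x\<^sub>0 - V x\<^sub>0"
  obtains X Y \<eta> where "\<And>n. X n \<in> cball x\<^sub>0 r" "\<And>n. Y n \<in> cball x\<^sub>0 r"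
    "\<And>n a b. a \<in> cball x\<^sub>0 r \<Longrightarrow> b \<in> cball x\<^sub>0 r \<Longrightarrow>
      doubling_fun w V \<eta> x\<^sub>0 n a b \<le> doubling_fun w V \<eta> x\<^sub>0 n (X n) (Y n)"
    "X \<longlonglongrightarrow> x\<^sub>0" "Y \<longlonglongrightarrow> x\<^sub>0" "\<forall>\<^sub>F n in sequentially. Y n \<in> \<Omega> \<or> X n \<notin> closure \<Omega>"
proof -
  obtain \<eta> where cone_dir: "\<And>X Y. X \<longlonglongrightarrow> x\<^sub>0 \<Longrightarrow> Y \<longlonglongrightarrow> x\<^sub>0 \<Longrightarrow>
      (\<lambda>n. real n *\<^sub>R (X n - Y n) - \<eta>) \<longlonglongrightarrow> 0 \<Longrightarrow>
      \<forall>\<^sub>F n in sequentially. Y n \<in> \<Omega> \<or> X n \<notin> closure \<Omega>"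
    by (rule cone_condition_direction[where x = x\<^sub>0, OF assms(1,2)]) blast
  obtain X Y where X: "\<And>n. X n \<in> cball x\<^sub>0 r" and Y: "\<And>n. Y n \<in> cball x\<^sub>0 r"
    and max: "\<And>n a b. a \<in> cball x\<^sub>0 r \<Longrightarrow> b \<in> cball x\<^sub>0 r \<Longrightarrow>
      doubling_fun w V \<eta> x\<^sub>0 n a b \<le> doubling_fun w V \<eta> x\<^sub>0 n (X n) (Y n)"
    using doubling_fun_maximizers[where \<eta> = \<eta> and x\<^sub>0 = x\<^sub>0, OF compact_cball _ w_cont V_cont] \<open>r > 0\<close>
    by auto
  note lim = doubling_maximizers_converge[OF \<open>r > 0\<close> V_cont local_max X Y max]
  show thesis
    using that[OF X Y max lim(1,2) cone_dir[OF lim]] .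
qed

section \<open>No interior maximum of the penalised difference\<close>

context rhs_with_modulus
begin

lemma semijet_products_contradiction:
  assumes "y \<in> \<Omega> \<or> x \<notin> closure \<Omega>"
    and sub: "ereal P \<le> usc_env pos_orthant (hat_rhs f z) x"
    and super: "lsc_env pos_orthant f y \<le> ereal Q" and "0 \<le> Q"
    and products: "s * (Q + \<kappa>) \<le> P" and "0 < s" "s \<le> 1" "0 < \<kappa>"
    and F: "\<And>y. y \<in> \<Omega> \<Longrightarrow> f y \<le> F"
    and gap: "(1 - s) * F + m (dist x y) < s * \<kappa>"
  shows False
  using \<open>y \<in> \<Omega> \<or> x \<notin> closure \<Omega>\<close>
proof
  assume "y \<in> \<Omega>"
  then have "P \<le> f y + m (dist x y)"
    using order_trans[OF sub usc_env_hat_rhs_le_add_modulus[OF \<open>y \<in> \<Omega>\<close>]] by simp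
  moreover have "f y \<le> Q"
    using order_trans[OF rhs_le_lsc_env[OF \<open>y \<in> \<Omega>\<close>] super] by simp
  moreover have "(1 - s) * f y \<le> (1 - s) * F"
    using F[OF \<open>y \<in> \<Omega>\<close>] \<open>s \<le> 1\<close> by (intro mult_left_mono) auto
  moreover have "s * (f y + \<kappa>) \<le> s * (Q + \<kappa>)"
    using \<open>f y \<le> Q\<close> \<open>0 < s\<close> by simp
  ultimately show False
    using products gap by (simp add: algebra_simps)
next
  assume "x \<notin> closure \<Omega>"
  then have "P \<le> 0"
    using order_trans[OF sub usc_env_hat_rhs_outside[OF \<open>x \<notin> closure \<Omega>\<close>]]
    by (simp add: zero_ereal_def)
  moreover have "0 < s * (Q + \<kappa>)"
    using \<open>0 < s\<close> \<open>0 \<le> Q\<close> \<open>0 < \<kappa>\<close> by simp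
  ultimately show False
    using products by simp
qed


lemma eventually_product_gap:
  fixes d :: nat and F :: real
  assumes "X \<longlonglongrightarrow> x\<^sub>0" "Y \<longlonglongrightarrow> x\<^sub>0" "\<epsilon> > 0"
  defines "s \<equiv> \<lambda>n. (1 - 2 * norm (X n - x\<^sub>0) / \<epsilon>) ^ d"
  shows "\<forall>\<^sub>F n in sequentially. 2 * norm (X n - x\<^sub>0) < \<epsilon> \<and>
    (1 - s n) * F + m (dist (X n) (Y n)) < s n * \<epsilon> ^ d"
proof -
  have "(\<lambda>n. norm (X n - x\<^sub>0)) \<longlonglongrightarrow> 0"
    using \<open>X \<longlonglongrightarrow> x\<^sub>0\<close> by (simp add: LIM_zero_iff tendsto_norm_zero_iff)
  then have t_lim: "(\<lambda>n. 2 * norm (X n - x\<^sub>0)) \<longlonglongrightarrow> 0"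
    using tendsto_mult_right_zero by blast
  then have "s \<longlonglongrightarrow> (1 - 0 / \<epsilon>) ^ d"
    unfolding s_def using \<open>\<epsilon> > 0\<close> by (intro tendsto_intros) auto
  moreover have "(\<lambda>n. dist (X n) (Y n)) \<longlonglongrightarrow> dist x\<^sub>0 x\<^sub>0"
    using assms(1,2) by (rule tendsto_dist)
  then have "(\<lambda>n. m (dist (X n) (Y n))) \<longlonglongrightarrow> m 0"
    by (intro continuous_on_tendsto_compose[OF m_cont]) auto
  ultimately have "(\<lambda>n. s n * \<epsilon> ^ d - ((1 - s n) * F + m (dist (X n) (Y n))))
      \<longlonglongrightarrow> 1 * \<epsilon> ^ d - ((1 - 1) * F + m 0)"
    by (intro tendsto_intros) auto
  moreover have "0 < 1 * \<epsilon> ^ d - ((1 - 1) * F + m 0)"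
    using \<open>\<epsilon> > 0\<close> m0 by simp
  ultimately have "\<forall>\<^sub>F n in sequentially. 0 < s n * \<epsilon> ^ d - ((1 - s n) * F + m (dist (X n) (Y n)))"
    by (rule order_tendstoD(1))
  moreover have "\<forall>\<^sub>F n in sequentially. 2 * norm (X n - x\<^sub>0) < \<epsilon>"
    using order_tendstoD(2)[OF t_lim \<open>\<epsilon> > 0\<close>] .
  ultimately show ?thesis
    by eventually_elim simp
qed


lemma penalized_difference_no_interior_max:
  fixes w v :: "real ^ 'n \<Rightarrow> real"
  assumes "bounded \<Omega>" and "cone_condition \<Omega>" and "r > 0" and "\<epsilon> > 0"
    and w_cont: "continuous_on (cball x\<^sub>0 r) w" and v_cont: "continuous_on (cball x\<^sub>0 r) v"
    and local_max: "\<And>x. x \<in> cball x\<^sub>0 r \<Longrightarrow>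
      w x - (v x + \<epsilon> * (\<Sum>i\<in>UNIV. x $ i)) \<le> w x\<^sub>0 - (v x\<^sub>0 + \<epsilon> * (\<Sum>i\<in>UNIV. x\<^sub>0 $ i))"
    and sub: "\<And>x p. x \<in> ball x\<^sub>0 r \<Longrightarrow> p \<in> superdiff w x \<Longrightarrow>
      ereal (\<Prod>i\<in>UNIV. p $ i) \<le> usc_env pos_orthant (hat_rhs f z) x"
    and super: "\<And>y q. y \<in> ball x\<^sub>0 r \<Longrightarrow> q \<in> subdiff v y \<Longrightarrow>
      lsc_env pos_orthant f y \<le> ereal (\<Prod>i\<in>UNIV. q $ i)"
    and super_nonneg: "\<And>y q i. y \<in> ball x\<^sub>0 r \<Longrightarrow> q \<in> subdiff v y \<Longrightarrow> 0 \<le> q $ i"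
  shows False
proof -
  define l :: "real ^ 'n" where "l = (\<chi> i. \<epsilon>)"
  define V where "V y = v y + l \<bullet> y" for y
  have V_eq: "V y = v y + \<epsilon> * (\<Sum>i\<in>UNIV. y $ i)" for y
    by (simp add: V_def l_def inner_vec_def sum_distrib_left)
  have V_cont: "continuous_on (cball x\<^sub>0 r) V"
    unfolding V_def by (intro continuous_intros v_cont)
  have local_max': "w x - V x \<le> w x\<^sub>0 - V x\<^sub>0" if "x \<in> cball x\<^sub>0 r" for x
    using local_max[OF that] by (simp add: V_eq)
  obtain F where F: "\<And>y. y \<in> \<Omega> \<Longrightarrow> f y \<le> F"
    using rhs_bounded_above[OF \<open>bounded \<Omega>\<close>] by blast
  show False
  proof (rule cone_condition_doubling_maximizers[OF \<Omega>_open \<open>cone_condition \<Omega>\<close> \<open>r > 0\<close> w_cont V_cont local_max'])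
    fix X Y \<eta>
    assume max: "\<And>n a b. a \<in> cball x\<^sub>0 r \<Longrightarrow> b \<in> cball x\<^sub>0 r \<Longrightarrow>
        doubling_fun w V \<eta> x\<^sub>0 n a b \<le> doubling_fun w V \<eta> x\<^sub>0 n (X n) (Y n)"
      and "X \<longlonglongrightarrow> x\<^sub>0" "Y \<longlonglongrightarrow> x\<^sub>0" and cone_dir: "\<forall>\<^sub>F n in sequentially. Y n \<in> \<Omega> \<or> X n \<notin> closure \<Omega>"
    define t where "t n = 2 * norm (X n - x\<^sub>0)" for n
    define s where "s n = (1 - t n / \<epsilon>) ^ CARD('n)" for n
    note cone_dir
    moreover have "\<forall>\<^sub>F n in sequentially. X n \<in> ball x\<^sub>0 (r / 2)"
      by (rule topological_tendstoD[OF \<open>X \<longlonglongrightarrow> x\<^sub>0\<close> open_ball]) (use \<open>r > 0\<close> in simp)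
    moreover have "\<forall>\<^sub>F n in sequentially. Y n \<in> ball x\<^sub>0 (r / 2)"
      by (rule topological_tendstoD[OF \<open>Y \<longlonglongrightarrow> x\<^sub>0\<close> open_ball]) (use \<open>r > 0\<close> in simp)
    moreover note eventually_product_gap[where d = "CARD('n)" and F = F,
        OF \<open>X \<longlonglongrightarrow> x\<^sub>0\<close> \<open>Y \<longlonglongrightarrow> x\<^sub>0\<close> \<open>\<epsilon> > 0\<close>]
    ultimately have "\<forall>\<^sub>F n in sequentially. (Y n \<in> \<Omega> \<or> X n \<notin> closure \<Omega>) \<and>
        X n \<in> ball x\<^sub>0 (r / 2) \<and> Y n \<in> ball x\<^sub>0 (r / 2) \<and>
        t n < \<epsilon> \<and> (1 - s n) * F + m (dist (X n) (Y n)) < s n * \<epsilon> ^ CARD('n)"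
      unfolding s_def t_def by eventually_elim blast
    then obtain n where n: "Y n \<in> \<Omega> \<or> X n \<notin> closure \<Omega>"
      "X n \<in> ball x\<^sub>0 (r / 2)" "Y n \<in> ball x\<^sub>0 (r / 2)" "t n < \<epsilon>"
      "(1 - s n) * F + m (dist (X n) (Y n)) < s n * \<epsilon> ^ CARD('n)"
      by (auto simp: eventually_sequentially)
    define p where "p = (2 * real n) *\<^sub>R (real n *\<^sub>R (X n - Y n) - \<eta>) + 2 *\<^sub>R (X n - x\<^sub>0)"
    define q where "q = (2 * real n) *\<^sub>R (real n *\<^sub>R (X n - Y n) - \<eta>) - l"
    have "p \<in> superdiff w (X n)" "q \<in> subdiff v (Y n)"
      using doubling_fun_semijets[OF n(2,3), of w v l \<eta>] max[of _ _ n]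
      unfolding p_def q_def V_def[abs_def] by auto
    moreover have "X n \<in> ball x\<^sub>0 r" "Y n \<in> ball x\<^sub>0 r"
      using n(2,3) subset_ball[of "r / 2" r x\<^sub>0] \<open>r > 0\<close> by auto
    ultimately have P: "ereal (\<Prod>i\<in>UNIV. p $ i) \<le> usc_env pos_orthant (hat_rhs f z) (X n)"
      and Q: "lsc_env pos_orthant f (Y n) \<le> ereal (\<Prod>i\<in>UNIV. q $ i)"
      and q_nonneg: "\<And>i. 0 \<le> q $ i"
      using sub super super_nonneg by blast+
    have "q $ i + \<epsilon> - t n \<le> p $ i" for i
      using component_le_norm_cart[of "X n - x\<^sub>0" i]
      by (simp add: p_def q_def l_def t_def abs_le_iff)
    then have products: "s n * ((\<Prod>i\<in>UNIV. q $ i) + \<epsilon> ^ CARD('n)) \<le> (\<Prod>i\<in>UNIV. p $ i)"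
      using prod_ge_of_componentwise_ge[of UNIV "\<lambda>i. q $ i" \<epsilon> "t n" "\<lambda>i. p $ i"]
        q_nonneg \<open>\<epsilon> > 0\<close> n(4) unfolding s_def t_def by auto
    have "0 < s n" "s n \<le> 1"
      using n(4) \<open>\<epsilon> > 0\<close> by (auto simp: s_def t_def field_simps power_le_one)
    then show False
      using semijet_products_contradiction[OF n(1) P Q _ products _ _ _ F n(5)]
        q_nonneg \<open>\<epsilon> > 0\<close> by (auto intro: prod_nonneg)
  qed
qed

end

section \<open>Truncation and the comparison principle\<close>

lemma open_pos_orthant: "open (pos_orthant :: (real ^ 'n) set)"
proof -
  have "pos_orthant = (\<Inter>i. {x :: real ^ 'n. 0 < x $ i})"
    by (auto simp: pos_orthant_def)
  moreover have "open (\<Inter>i. {x :: real ^ 'n. 0 < x $ i})"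
    by (intro open_INT) (auto intro: open_halfspace_component_gt_cart)
  ultimately show ?thesis
    by simp
qed

lemma pos_orthant_subset_cl_orthant: "pos_orthant \<subseteq> cl_orthant"
  by (auto simp: pos_orthant_def cl_orthant_def less_imp_le)

lemma continuous_on_trunc:
  assumes "continuous_on cl_orthant u" "z \<in> cl_orthant"
  shows "continuous_on cl_orthant (trunc u z)"
  unfolding trunc_def
proof (rule continuous_on_compose2[OF assms(1)])
  show "continuous_on cl_orthant (\<lambda>x. \<chi> i. min (x $ i) (z $ i))"
    by (intro continuous_intros)
  show "(\<lambda>x. \<chi> i. min (x $ i) (z $ i)) ` cl_orthant \<subseteq> cl_orthant"
    using assms(2) by (auto simp: cl_orthant_def)
qed

lemma trunc_eq_on_cbox:
  assumes "x \<in> cbox 0 z"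
  shows "trunc u z x = u x"
proof -
  have "(\<chi> i. min (x $ i) (z $ i)) = x"
    using assms by (auto simp: mem_box_cart vec_eq_iff)
  then show ?thesis
    by (simp add: trunc_def)
qed

lemma penalized_trunc_le_at_truncation:
  fixes u v :: "real ^ 'n \<Rightarrow> real"
  assumes "pareto_monotone cl_orthant v" "x \<in> cl_orthant" "z \<in> cl_orthant" "0 \<le> \<epsilon>"
  defines "y \<equiv> \<chi> i. min (x $ i) (z $ i)"
  shows "trunc u z x - (v x + \<epsilon> * (\<Sum>i\<in>UNIV. x $ i)) \<le> trunc u z y - (v y + \<epsilon> * (\<Sum>i\<in>UNIV. y $ i))"
proof -
  have "y \<in> cl_orthant" "vle y x"
    using assms(2,3) by (auto simp: y_def cl_orthant_def vle_def)
  then have "v y \<le> v x"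
    using assms(1,2) by (auto simp: pareto_monotone_def)
  moreover have "(\<Sum>i\<in>UNIV. y $ i) \<le> (\<Sum>i\<in>UNIV. x $ i)"
    by (intro sum_mono) (simp add: y_def)
  then have "\<epsilon> * (\<Sum>i\<in>UNIV. y $ i) \<le> \<epsilon> * (\<Sum>i\<in>UNIV. x $ i)"
    using \<open>0 \<le> \<epsilon>\<close> by (rule mult_left_mono)
  moreover have "trunc u z y = trunc u z x"
    by (simp add: trunc_def y_def)
  ultimately show ?thesis
    by linarith
qed

lemma penalized_truncation_max:
  fixes u v :: "real ^ 'n \<Rightarrow> real"
  assumes u_cont: "continuous_on cl_orthant u" and v_cont: "continuous_on cl_orthant v"
    and v_mono: "pareto_monotone cl_orthant v"
    and bdry: "\<forall>x\<in>cl_orthant - pos_orthant. u x \<le> v x"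
    and "z \<in> pos_orthant" "v z < u z"
  obtains \<epsilon> x\<^sub>0 where "\<epsilon> > 0" "x\<^sub>0 \<in> pos_orthant"
    "\<And>x. x \<in> cl_orthant \<Longrightarrow>
      trunc u z x - (v x + \<epsilon> * (\<Sum>i\<in>UNIV. x $ i)) \<le> trunc u z x\<^sub>0 - (v x\<^sub>0 + \<epsilon> * (\<Sum>i\<in>UNIV. x\<^sub>0 $ i))"
proof -
  have z_pos: "0 < z $ i" for i
    using \<open>z \<in> pos_orthant\<close> by (simp add: pos_orthant_def)
  have "(\<Sum>i\<in>UNIV. z $ i) > 0"
    using z_pos by (simp add: sum_pos)
  define \<epsilon> where "\<epsilon> = (u z - v z) / (2 * (\<Sum>i\<in>UNIV. z $ i))"
  have "\<epsilon> > 0"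
    using \<open>v z < u z\<close> \<open>(\<Sum>i\<in>UNIV. z $ i) > 0\<close> by (simp add: \<epsilon>_def)
  define G where "G x = trunc u z x - (v x + \<epsilon> * (\<Sum>i\<in>UNIV. x $ i))" for x
  have box_cl: "cbox 0 z \<subseteq> cl_orthant"
    by (auto simp: mem_box_cart cl_orthant_def)
  have "continuous_on (cbox 0 z) (\<lambda>x. u x - (v x + \<epsilon> * (\<Sum>i\<in>UNIV. x $ i)))"
    by (intro continuous_intros continuous_on_subset[OF u_cont box_cl]
        continuous_on_subset[OF v_cont box_cl])
  then have "continuous_on (cbox 0 z) G"
    by (rule continuous_on_cong[THEN iffD1, rotated 2]) (simp_all add: G_def trunc_eq_on_cbox)
  moreover have "0 \<in> cbox 0 z"
    using z_pos by (auto simp: mem_box_cart less_imp_le)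
  ultimately obtain x\<^sub>0 where "x\<^sub>0 \<in> cbox 0 z" and box_max: "\<And>x. x \<in> cbox 0 z \<Longrightarrow> G x \<le> G x\<^sub>0"
    using continuous_attains_sup[of "cbox 0 z" G] by auto
  have "z \<in> cl_orthant"
    using z_pos by (auto simp: cl_orthant_def less_imp_le)
  have global_max: "G x \<le> G x\<^sub>0" if "x \<in> cl_orthant" for x
  proof -
    have "(\<chi> i. min (x $ i) (z $ i)) \<in> cbox 0 z"
      using that z_pos by (auto simp: mem_box_cart cl_orthant_def less_imp_le)
    then show ?thesis
      using penalized_trunc_le_at_truncation[OF v_mono that \<open>z \<in> cl_orthant\<close>, of \<epsilon> u] \<open>\<epsilon> > 0\<close>
        box_max unfolding G_def by fastforce
  qed
  have "x\<^sub>0 \<in> pos_orthant"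
  proof (rule ccontr)
    assume "x\<^sub>0 \<notin> pos_orthant"
    moreover have "x\<^sub>0 \<in> cl_orthant"
      using \<open>x\<^sub>0 \<in> cbox 0 z\<close> box_cl by blast
    ultimately have "u x\<^sub>0 \<le> v x\<^sub>0" and "0 \<le> (\<Sum>i\<in>UNIV. x\<^sub>0 $ i)"
      using bdry by (auto simp: cl_orthant_def intro: sum_nonneg)
    then have "G x\<^sub>0 \<le> 0"
      using \<open>\<epsilon> > 0\<close> \<open>x\<^sub>0 \<in> cbox 0 z\<close> by (simp add: G_def trunc_eq_on_cbox add_increasing2)
    moreover have "G z > 0"
      using \<open>v z < u z\<close> \<open>(\<Sum>i\<in>UNIV. z $ i) > 0\<close> z_pos
      by (simp add: G_def trunc_eq_on_cbox mem_box_cart less_imp_le \<epsilon>_def field_simps)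
    ultimately show False
      using global_max[OF \<open>z \<in> cl_orthant\<close>] by linarith
  qed
  show thesis
    using that \<open>\<epsilon> > 0\<close> \<open>x\<^sub>0 \<in> pos_orthant\<close> global_max by (simp add: G_def)
qed

theorem theorem2p10:
  fixes \<Omega> :: "(real ^ 'n) set"
    and f u v :: "real ^ 'n \<Rightarrow> real"
    and m :: "real \<Rightarrow> real"
  assumes dim: "CARD('n) \<ge> 2"
    and \<Omega>_sub: "\<Omega> \<subseteq> pos_orthant" and \<Omega>_open: "open \<Omega>" and \<Omega>_bdd: "bounded \<Omega>"
    and cone: "cone_condition \<Omega>"
    and f_nonneg: "\<forall>x\<in>pos_orthant. 0 \<le> f x"
    and m_cont: "continuous_on {0..} m" and m_mono: "mono_on {0..} m"
    and m_nonneg: "\<forall>t\<ge>0. 0 \<le> m t" and m0: "m 0 = 0"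
    and f_mod: "\<forall>x\<in>\<Omega>. \<forall>y\<in>\<Omega>. \<bar>f x - f y\<bar> \<le> m (dist x y)"
    and f_out: "\<forall>x\<in>pos_orthant - \<Omega>. f x = 0"
    and u_cont: "continuous_on cl_orthant u" and v_cont: "continuous_on cl_orthant v"
    and u_sub: "visc_sub u f" and v_super: "visc_super v f"
    and u_trunc: "truncatable u f"
    and v_mono: "pareto_monotone cl_orthant v"
    and bdry: "\<forall>x\<in>cl_orthant - pos_orthant. u x \<le> v x"
  shows "\<forall>x\<in>pos_orthant. u x \<le> v x"
proof (rule ccontr)
  assume "\<not> (\<forall>x\<in>pos_orthant. u x \<le> v x)"
  then obtain z where z: "z \<in> pos_orthant" "v z < u z"
    by auto
  interpret rhs_with_modulus \<Omega> f m
    using \<Omega>_sub \<Omega>_open f_nonneg m_cont m_mono m_nonneg m0 f_mod f_out by unfold_locales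
  obtain \<epsilon> x\<^sub>0 where "\<epsilon> > 0" "x\<^sub>0 \<in> pos_orthant" and max: "\<And>x. x \<in> cl_orthant \<Longrightarrow>
      trunc u z x - (v x + \<epsilon> * (\<Sum>i\<in>UNIV. x $ i)) \<le> trunc u z x\<^sub>0 - (v x\<^sub>0 + \<epsilon> * (\<Sum>i\<in>UNIV. x\<^sub>0 $ i))"
    using penalized_truncation_max[OF u_cont v_cont v_mono bdry z] by blast
  obtain r where "r > 0" and r: "cball x\<^sub>0 r \<subseteq> pos_orthant"
    using open_pos_orthant \<open>x\<^sub>0 \<in> pos_orthant\<close> open_contains_cball by blast
  then have r_cl: "cball x\<^sub>0 r \<subseteq> cl_orthant"
    using pos_orthant_subset_cl_orthant by blast
  have ball_pos: "ball x\<^sub>0 r \<subseteq> pos_orthant"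
    using r ball_subset_cball by blast
  show False
  proof (rule penalized_difference_no_interior_max[OF \<Omega>_bdd cone \<open>r > 0\<close> \<open>\<epsilon> > 0\<close>])
    show "continuous_on (cball x\<^sub>0 r) (trunc u z)"
      using continuous_on_trunc[OF u_cont] z(1) pos_orthant_subset_cl_orthant r_cl
      by (blast intro: continuous_on_subset)
    show "continuous_on (cball x\<^sub>0 r) v"
      using v_cont r_cl by (rule continuous_on_subset)
    show "trunc u z x - (v x + \<epsilon> * (\<Sum>i\<in>UNIV. x $ i))
        \<le> trunc u z x\<^sub>0 - (v x\<^sub>0 + \<epsilon> * (\<Sum>i\<in>UNIV. x\<^sub>0 $ i))" if "x \<in> cball x\<^sub>0 r" for x
      using max that r_cl by blast
    show "ereal (\<Prod>i\<in>UNIV. p $ i) \<le> usc_env pos_orthant (hat_rhs f z) x"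
      if "x \<in> ball x\<^sub>0 r" "p \<in> superdiff (trunc u z) x" for x p
      using u_trunc z(1) that ball_pos unfolding truncatable_def visc_sub_def by blast
    show "lsc_env pos_orthant f y \<le> ereal (\<Prod>i\<in>UNIV. q $ i)"
      if "y \<in> ball x\<^sub>0 r" "q \<in> subdiff v y" for y q
      using v_super that ball_pos unfolding visc_super_def by blast
    show "0 \<le> q $ i" if "y \<in> ball x\<^sub>0 r" "q \<in> subdiff v y" for y q i
      using subdiff_nonneg_of_pareto_monotone[OF v_mono _ that(2)] that(1) ball_pos by blast
  qed
qed

end
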